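(* For every $n\ge 2$, the number of permutations in $\mathcal{S}_{n,1}^{1\prec n}(1324)$ equals the number of $1324$-avoiding vertical dominoes with $n-2$ points; more precisely, there is an explicit bijection between these two sets.
   Context: $\mathcal{S}_n(1324)$ denotes the set of permutations of $\{1,\dots,n\}$ (written in one-line notation) that avoid the pattern $1324$. For $a,k\ge1$, $\mathcal{S}_{n,k}^{a\prec n}(1324)$ is the set of $\sigma\in\mathcal{S}_n(1324)$ such that $\sigma^{-1}(n)-\sigma^{-1}(a)=k$ and $\sigma^{-1}(b)>\sigma^{-1}(n)$ for every $b\in\{1,\dots,a-1\}$. Thus $\mathcal{S}_{n,1}^{1\prec n}(1324)$ consists of the $1324$-avoiding permutations in which the entry $1$ is immediately followed by the entry $n$. A $1324$-avoiding vertical domino with $m$ points is a pair $(\pi,h)$ where $\pi$ is a permutation of $\{1,\dots,m\}$ avoiding $1324$ and $h\in\{0,1,\dots,m\}$ is a horizontal cut such that the subsequence of $\pi$ formed by the values $\le h$ (the bottom cell) is order-isomorphic to a $132$-avoiding permutation and the subsequence formed by the values $>h$ (the top cell) is order-isomorphic to a $213$-avoiding permutation; two dominoes are different if they differ in $\pi$ or in $h$. *)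

theory Defs
  imports Main "HOL-Library.Sublist"
begin

definition perms :: "nat \<Rightarrow> nat list set" where
  "perms n = {xs. distinct xs \<and> set xs = {1..n}}"

definition order_iso :: "nat list \<Rightarrow> nat list \<Rightarrow> bool" where
  "order_iso xs ys \<longleftrightarrow> length xs = length ys \<and>
     (\<forall>i<length xs. \<forall>j<length xs. xs ! i < xs ! j \<longleftrightarrow> ys ! i < ys ! j)"

definition contains :: "nat list \<Rightarrow> nat list \<Rightarrow> bool" where
  "contains xs p \<longleftrightarrow> (\<exists>ys. subseq ys xs \<and> order_iso ys p)"

definition avoids :: "nat list \<Rightarrow> nat list \<Rightarrow> bool" where
  "avoids xs p \<longleftrightarrow> \<not> contains xs p"

definition Av1324 :: "nat \<Rightarrow> nat list set" where
  "Av1324 n = {\<sigma> \<in> perms n. avoids \<sigma> [1,3,2,4]}"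

text \<open>S_{n,k}^{a \<prec> n}(1324), positions 0-based (differences are unaffected).\<close>
definition S_prec :: "nat \<Rightarrow> nat \<Rightarrow> nat \<Rightarrow> nat list set" where
  "S_prec n k a = {\<sigma> \<in> Av1324 n. \<exists>i j. i < length \<sigma> \<and> j < length \<sigma> \<and>
      \<sigma> ! i = a \<and> \<sigma> ! j = n \<and> j = i + k \<and>
      (\<forall>b\<in>{1..<a}. \<forall>l<length \<sigma>. \<sigma> ! l = b \<longrightarrow> l > j)}"

definition dominoes :: "nat \<Rightarrow> (nat list \<times> nat) set" where
  "dominoes m = {(\<pi>, h). \<pi> \<in> Av1324 m \<and> h \<le> m \<and>
      (let bot = filter (\<lambda>v. v \<le> h) \<pi> in
         \<exists>\<tau>. \<tau> \<in> perms (length bot) \<and> avoids \<tau> [1,3,2] \<and> order_iso bot \<tau>) \<and>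
      (let top = filter (\<lambda>v. h < v) \<pi> in
         \<exists>\<tau>. \<tau> \<in> perms (length top) \<and> avoids \<tau> [2,1,3] \<and> order_iso top \<tau>)}"

end

theory Submission
  imports Defs
begin

(*
  Write \<sigma> = A 1 n B. Deleting the adjacent entries 1 and n and reducing leaves a permutation \<rho>
  of length n - 2 with a cut h = |A|. An occurrence of 1324 in \<sigma> lies in \<rho>, or uses 1 as its
  smallest entry followed by a 213 in B, or uses n as its largest entry preceded by a 132 in A;
  adjacency of 1 and n excludes using both. So \<sigma> avoids 1324 iff \<rho> does, the first h entries
  of \<rho> avoid 132 and the others avoid 213. Inverting \<rho> turns these position cells into value
  cells, and 1324, 132, 213 are involutions, so (\<rho>\<inverse>, h) is precisely a vertical domino.
*)

lemma subseq_iff_map_nth: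
  "subseq ys xs \<longleftrightarrow>
     (\<exists>ix. sorted_wrt (<) ix \<and> (\<forall>i\<in>set ix. i < length xs) \<and> ys = map ((!) xs) ix)"
proof (induction xs arbitrary: ys)
  case Nil
  then show ?case by auto
next
  case (Cons x xs)
  show ?case
  proof
    assume "subseq ys (x # xs)"
    then consider "subseq ys xs" | ys' where "ys = x # ys'" "subseq ys' xs"
      by (cases ys) (auto split: if_splits)
    then show "\<exists>ix. sorted_wrt (<) ix \<and> (\<forall>i\<in>set ix. i < length (x # xs)) \<and>
        ys = map ((!) (x # xs)) ix"
    proof cases
      case 1
      then obtain ix where "sorted_wrt (<) ix" "\<forall>i\<in>set ix. i < length xs" "ys = map ((!) xs) ix"
        using Cons.IH by blast
      then show ?thesis
        by (intro exI[of _ "map Suc ix"]) (auto simp: sorted_wrt_map)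
    next
      case 2
      then obtain ix where "sorted_wrt (<) ix" "\<forall>i\<in>set ix. i < length xs" "ys' = map ((!) xs) ix"
        using Cons.IH by blast
      with 2 show ?thesis
        by (intro exI[of _ "0 # map Suc ix"]) (auto simp: sorted_wrt_map)
    qed
  next
    assume "\<exists>ix. sorted_wrt (<) ix \<and> (\<forall>i\<in>set ix. i < length (x # xs)) \<and>
        ys = map ((!) (x # xs)) ix"
    then obtain ix where sorted: "sorted_wrt (<) ix" and bound: "\<forall>i\<in>set ix. i < length (x # xs)"
      and ys: "ys = map ((!) (x # xs)) ix" by blast
    define tail where "tail = map (\<lambda>i. i - 1) (filter (\<lambda>i. 0 < i) ix)"
    have ix: "ix = (if 0 \<in> set ix then 0 # map Suc tail else map Suc tail)"
      using sorted unfolding tail_def by (induction ix) (auto simp: filter_id_conv)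
    have "sorted_wrt (<) tail" "\<forall>i\<in>set tail. i < length xs"
      using sorted bound by (subst (asm) (1 2) ix; auto simp: sorted_wrt_map split: if_splits)+
    then have "subseq (map ((!) xs) tail) xs"
      using Cons.IH by blast
    then show "subseq ys (x # xs)"
      by (subst ys, subst ix) (auto simp: comp_def)
  qed
qed

lemma subseq_filter_iff:
  "subseq ys (filter Q xs) \<longleftrightarrow> subseq ys xs \<and> (\<forall>y\<in>set ys. Q y)"
proof
  assume a: "subseq ys (filter Q xs)"
  have "subseq ys xs" using a subseq_filter_left subseq_order.order_trans by blast
  moreover have "\<forall>y\<in>set ys. Q y"
  proof
    fix y assume "y \<in> set ys"
    from list_emb_set[OF a this] show "Q y" by auto
  qed
  ultimately show "subseq ys xs \<and> (\<forall>y\<in>set ys. Q y)" by blast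
next
  assume "subseq ys xs \<and> (\<forall>y\<in>set ys. Q y)"
  then show "subseq ys (filter Q xs)"
    by (metis filter_True subseq_filter)
qed

lemma contains_filter_iff:
  "contains (filter Q xs) p \<longleftrightarrow>
     (\<exists>ix. sorted_wrt (<) ix \<and> (\<forall>i\<in>set ix. i < length xs \<and> Q (xs ! i)) \<and>
        order_iso (map ((!) xs) ix) p)"
  \<comment> \<open>in two passes, else \<open>subseq_iff_map_nth\<close> also rewrites \<open>subseq ys (filter Q xs)\<close>\<close>
  unfolding contains_def subseq_filter_iff unfolding subseq_iff_map_nth by fastforce

lemma contains_iff:
  "contains xs p \<longleftrightarrow>
     (\<exists>ix. sorted_wrt (<) ix \<and> (\<forall>i\<in>set ix. i < length xs) \<and> order_iso (map ((!) xs) ix) p)"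
  using contains_filter_iff[of "\<lambda>_. True" xs p] by simp

lemma order_iso_132_iff: "order_iso [a, b, c::nat] [1, 3, 2] \<longleftrightarrow> a < c \<and> c < b"
  by (simp add: order_iso_def numeral_3_eq_3 All_less_Suc) linarith

lemma order_iso_213_iff: "order_iso [a, b, c::nat] [2, 1, 3] \<longleftrightarrow> b < a \<and> a < c"
  by (simp add: order_iso_def numeral_3_eq_3 All_less_Suc) linarith

lemma order_iso_1324_iff: "order_iso [a, b, c, d::nat] [1, 3, 2, 4] \<longleftrightarrow> a < c \<and> c < b \<and> b < d"
  by (simp add: order_iso_def eval_nat_numeral All_less_Suc) linarith

lemma order_iso_length: "order_iso xs ys \<Longrightarrow> length xs = length ys"
  by (simp add: order_iso_def)

lemma length_3_cases: "length ys = 3 \<Longrightarrow> \<exists>a b c. ys = [a, b, c]"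
  by (auto simp: numeral_3_eq_3 length_Suc_conv)

lemma length_4_cases: "length ys = 4 \<Longrightarrow> \<exists>a b c d. ys = [a, b, c, d]"
  by (auto simp: eval_nat_numeral length_Suc_conv)

definition has_132 :: "(nat \<Rightarrow> bool) \<Rightarrow> nat list \<Rightarrow> bool" where
  "has_132 Q xs \<longleftrightarrow> (\<exists>i j k. i < j \<and> j < k \<and> k < length xs \<and>
     Q (xs ! i) \<and> Q (xs ! j) \<and> Q (xs ! k) \<and> xs ! i < xs ! k \<and> xs ! k < xs ! j)"

definition has_213 :: "(nat \<Rightarrow> bool) \<Rightarrow> nat list \<Rightarrow> bool" where
  "has_213 Q xs \<longleftrightarrow> (\<exists>i j k. i < j \<and> j < k \<and> k < length xs \<and>
     Q (xs ! i) \<and> Q (xs ! j) \<and> Q (xs ! k) \<and> xs ! j < xs ! i \<and> xs ! i < xs ! k)"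

definition has_1324 :: "nat list \<Rightarrow> bool" where
  "has_1324 xs \<longleftrightarrow> (\<exists>i j k l. i < j \<and> j < k \<and> k < l \<and> l < length xs \<and>
     xs ! i < xs ! k \<and> xs ! k < xs ! j \<and> xs ! j < xs ! l)"

lemma contains_132_iff: "contains (filter Q xs) [1, 3, 2] \<longleftrightarrow> has_132 Q xs"
proof
  assume "contains (filter Q xs) [1, 3, 2]"
  then obtain ix where "sorted_wrt (<) ix" "\<forall>i\<in>set ix. i < length xs \<and> Q (xs ! i)"
    and iso: "order_iso (map ((!) xs) ix) [1, 3, 2]"
    unfolding contains_filter_iff by blast
  moreover have "length ix = 3"
    using order_iso_length[OF iso] by simp
  then obtain i j k where ix: "ix = [i, j, k]"
    using length_3_cases by blast
  moreover have "xs ! i < xs ! k \<and> xs ! k < xs ! j"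
    using iso unfolding ix list.map order_iso_132_iff .
  ultimately show "has_132 Q xs"
    unfolding has_132_def by auto
next
  assume "has_132 Q xs"
  then obtain i j k where "i < j \<and> j < k \<and> k < length xs \<and> Q (xs ! i) \<and> Q (xs ! j) \<and>
      Q (xs ! k) \<and> xs ! i < xs ! k \<and> xs ! k < xs ! j"
    unfolding has_132_def by blast
  then show "contains (filter Q xs) [1, 3, 2]"
    unfolding contains_filter_iff
    by (intro exI[of _ "[i, j, k]"]) (simp only: order_iso_132_iff list.map, auto)
qed

lemma contains_213_iff: "contains (filter Q xs) [2, 1, 3] \<longleftrightarrow> has_213 Q xs"
proof
  assume "contains (filter Q xs) [2, 1, 3]"
  then obtain ix where "sorted_wrt (<) ix" "\<forall>i\<in>set ix. i < length xs \<and> Q (xs ! i)"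
    and iso: "order_iso (map ((!) xs) ix) [2, 1, 3]"
    unfolding contains_filter_iff by blast
  moreover have "length ix = 3"
    using order_iso_length[OF iso] by simp
  then obtain i j k where ix: "ix = [i, j, k]"
    using length_3_cases by blast
  moreover have "xs ! j < xs ! i \<and> xs ! i < xs ! k"
    using iso unfolding ix list.map order_iso_213_iff .
  ultimately show "has_213 Q xs"
    unfolding has_213_def by auto
next
  assume "has_213 Q xs"
  then obtain i j k where "i < j \<and> j < k \<and> k < length xs \<and> Q (xs ! i) \<and> Q (xs ! j) \<and>
      Q (xs ! k) \<and> xs ! j < xs ! i \<and> xs ! i < xs ! k"
    unfolding has_213_def by blast
  then show "contains (filter Q xs) [2, 1, 3]"
    unfolding contains_filter_iff
    by (intro exI[of _ "[i, j, k]"]) (simp only: order_iso_213_iff list.map, auto)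
qed

lemma contains_1324_iff: "contains xs [1, 3, 2, 4] \<longleftrightarrow> has_1324 xs"
proof
  assume "contains xs [1, 3, 2, 4]"
  then obtain ix where "sorted_wrt (<) ix" "\<forall>i\<in>set ix. i < length xs"
    and iso: "order_iso (map ((!) xs) ix) [1, 3, 2, 4]"
    unfolding contains_iff by blast
  moreover have "length ix = 4"
    using order_iso_length[OF iso] by simp
  then obtain i j k l where ix: "ix = [i, j, k, l]"
    using length_4_cases by blast
  moreover have "xs ! i < xs ! k \<and> xs ! k < xs ! j \<and> xs ! j < xs ! l"
    using iso unfolding ix list.map order_iso_1324_iff .
  ultimately show "has_1324 xs"
    unfolding has_1324_def by auto
next
  assume "has_1324 xs"
  then obtain i j k l where "i < j \<and> j < k \<and> k < l \<and> l < length xs \<and>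
      xs ! i < xs ! k \<and> xs ! k < xs ! j \<and> xs ! j < xs ! l"
    unfolding has_1324_def by blast
  then show "contains xs [1, 3, 2, 4]"
    unfolding contains_iff
    by (intro exI[of _ "[i, j, k, l]"]) (simp only: order_iso_1324_iff list.map, auto)
qed

lemma contains_order_iso:
  assumes iso: "order_iso xs ys"
  shows "contains xs p \<longleftrightarrow> contains ys p"
proof -
  have "order_iso (map ((!) xs) ix) q \<longleftrightarrow> order_iso (map ((!) ys) ix) q"
    if "\<forall>i\<in>set ix. i < length xs" for ix q
    using iso that unfolding order_iso_def by (auto simp: nth_mem)
  then show ?thesis
    unfolding contains_iff using order_iso_length[OF iso] by auto
qed

lemma perms_distinct: "xs \<in> perms m \<Longrightarrow> distinct xs"
  by (simp add: perms_def)

lemma length_perms: "xs \<in> perms m \<Longrightarrow> length xs = m"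
  using distinct_card[of xs] by (simp add: perms_def)

lemma perms_nth_bounds: "xs \<in> perms m \<Longrightarrow> i < m \<Longrightarrow> 1 \<le> xs ! i \<and> xs ! i \<le> m"
  using nth_mem[of i xs] by (auto simp: perms_def length_perms)

lemma perms_iff_subset: "xs \<in> perms m \<longleftrightarrow> distinct xs \<and> length xs = m \<and> set xs \<subseteq> {1..m}"
proof
  assume "distinct xs \<and> length xs = m \<and> set xs \<subseteq> {1..m}"
  moreover from this have "set xs = {1..m}"
    using distinct_card[of xs] by (intro card_subset_eq) auto
  ultimately show "xs \<in> perms m"
    by (simp add: perms_def)
qed (auto simp: perms_def length_perms)

lemma ex_perm_order_iso:
  fixes xs :: "nat list"
  assumes "distinct xs"
  shows "\<exists>\<tau>. \<tau> \<in> perms (length xs) \<and> order_iso xs \<tau>"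
proof -
  define rank where "rank x = card {y \<in> set xs. y \<le> x}" for x
  have rank_less: "rank x < rank z" if "z \<in> set xs" "x < z" for x z
  proof -
    have "{y \<in> set xs. y \<le> x} \<subseteq> {y \<in> set xs. y \<le> z}"
      "z \<in> {y \<in> set xs. y \<le> z}" "z \<notin> {y \<in> set xs. y \<le> x}"
      using that by auto
    then have "{y \<in> set xs. y \<le> x} \<subset> {y \<in> set xs. y \<le> z}"
      by blast
    then show ?thesis
      unfolding rank_def by (simp add: psubset_card_mono)
  qed
  have rank_less_iff: "rank x < rank z \<longleftrightarrow> x < z" if "x \<in> set xs" "z \<in> set xs" for x z
    using rank_less[OF that(2), of x] rank_less[OF that(1), of z]
    by (cases x z rule: linorder_cases) auto
  have "inj_on rank (set xs)"
  proof (rule inj_onI)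
    fix x z
    assume "x \<in> set xs" "z \<in> set xs" "rank x = rank z"
    then show "x = z"
      using rank_less[of z x] rank_less[of x z] by (cases x z rule: linorder_cases) auto
  qed
  then have "distinct (map rank xs)"
    using assms by (simp add: distinct_map)
  moreover have "rank x \<in> {1..length xs}" if "x \<in> set xs" for x
  proof -
    have "0 < rank x"
      unfolding rank_def using that by (auto simp: card_gt_0_iff)
    moreover have "rank x \<le> card (set xs)"
      unfolding rank_def by (rule card_mono) auto
    ultimately show ?thesis
      using assms by (simp add: distinct_card)
  qed
  moreover have "order_iso xs (map rank xs)"
    unfolding order_iso_def using rank_less_iff by simp
  ultimately show ?thesis
    by (intro exI[of _ "map rank xs"]) (auto simp: perms_iff_subset)
qed

lemma ex_avoiding_order_iso_iff:
  assumes "distinct xs"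
  shows "(\<exists>\<tau>. \<tau> \<in> perms (length xs) \<and> avoids \<tau> p \<and> order_iso xs \<tau>) \<longleftrightarrow> \<not> contains xs p"
proof -
  obtain \<tau> where "\<tau> \<in> perms (length xs)" "order_iso xs \<tau>"
    using ex_perm_order_iso[OF assms] by blast
  then show ?thesis
    unfolding avoids_def using contains_order_iso by blast
qed

lemma Av1324_eq: "Av1324 n = {\<sigma> \<in> perms n. \<not> has_1324 \<sigma>}"
  unfolding Av1324_def avoids_def contains_1324_iff ..

lemma dominoes_eq:
  "dominoes m = {(\<pi>, h). \<pi> \<in> perms m \<and> \<not> has_1324 \<pi> \<and> h \<le> m \<and>
     \<not> has_132 (\<lambda>v. v \<le> h) \<pi> \<and> \<not> has_213 (\<lambda>v. h < v) \<pi>}"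
proof -
  have cell_iff: "(\<exists>\<tau>. \<tau> \<in> perms (length (filter Q \<pi>)) \<and> avoids \<tau> p \<and> order_iso (filter Q \<pi>) \<tau>)
      \<longleftrightarrow> \<not> contains (filter Q \<pi>) p" if "\<pi> \<in> perms m" for Q p \<pi>
    using that by (intro ex_avoiding_order_iso_iff distinct_filter perms_distinct)
  show ?thesis
  proof (rule set_eqI, clarify)
    fix \<pi> h
    show "(\<pi>, h) \<in> dominoes m \<longleftrightarrow> (\<pi>, h) \<in> {(\<pi>, h). \<pi> \<in> perms m \<and> \<not> has_1324 \<pi> \<and> h \<le> m \<and>
        \<not> has_132 (\<lambda>v. v \<le> h) \<pi> \<and> \<not> has_213 (\<lambda>v. h < v) \<pi>}"
    proof (cases "\<pi> \<in> perms m")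
      case True
      show ?thesis
        unfolding dominoes_def Av1324_eq Let_def mem_Collect_eq case_prod_conv cell_iff[OF True]
          contains_132_iff contains_213_iff
        using True by blast
    qed (simp add: dominoes_def Av1324_eq)
  qed
qed

lemma S_prec_1_1_eq:
  "S_prec n 1 1 = {\<sigma> \<in> perms n. \<not> has_1324 \<sigma> \<and>
     (\<exists>i. Suc i < length \<sigma> \<and> \<sigma> ! i = 1 \<and> \<sigma> ! Suc i = n)}"
  unfolding S_prec_def Av1324_eq by (auto dest: Suc_lessD)

text \<open>Entries are the values \<open>1..m\<close>, positions are \<open>0..<m\<close>; this accounts for the shifts.\<close>

definition pos :: "nat list \<Rightarrow> nat \<Rightarrow> nat" where
  "pos xs v = (THE i. i < length xs \<and> xs ! i = v)"

definition perm_inv :: "nat list \<Rightarrow> nat list" where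
  "perm_inv xs = map (\<lambda>y. Suc (pos xs (Suc y))) [0..<length xs]"

lemma pos_nth: "distinct xs \<Longrightarrow> i < length xs \<Longrightarrow> pos xs (xs ! i) = i"
  unfolding pos_def by (rule the_equality) (auto simp: nth_eq_iff_index_eq)

lemma length_perm_inv [simp]: "length (perm_inv xs) = length xs"
  by (simp add: perm_inv_def)

lemma perm_inv_nth: "y < length xs \<Longrightarrow> perm_inv xs ! y = Suc (pos xs (Suc y))"
  by (simp add: perm_inv_def)

lemma perm_inv_nth_nth:
  assumes "xs \<in> perms m" "x < m"
  shows "perm_inv xs ! (xs ! x - 1) = Suc x"
proof -
  have "1 \<le> xs ! x" "xs ! x - 1 < length xs"
    using perms_nth_bounds[OF assms] assms by (auto simp: length_perms)
  then have "perm_inv xs ! (xs ! x - 1) = Suc (pos xs (xs ! x))"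
    by (simp add: perm_inv_nth)
  also have "pos xs (xs ! x) = x"
    using assms by (simp add: pos_nth perms_distinct length_perms)
  finally show ?thesis .
qed

lemma nth_perm_inv_nth:
  assumes "xs \<in> perms m" "y < m"
  shows "xs ! (perm_inv xs ! y - 1) = Suc y \<and> 1 \<le> perm_inv xs ! y \<and> perm_inv xs ! y \<le> m"
proof -
  have "Suc y \<in> set xs"
    using assms by (auto simp: perms_def)
  then obtain i where "i < m" "xs ! i = Suc y"
    using assms(1) by (auto simp: in_set_conv_nth length_perms)
  then show ?thesis
    using assms perm_inv_nth[of y xs] pos_nth[OF perms_distinct, of xs m i]
    by (simp add: length_perms)
qed

lemma perm_inv_perms:
  assumes "xs \<in> perms m"
  shows "perm_inv xs \<in> perms m"
  unfolding perms_iff_subset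
proof (intro conjI)
  show "distinct (perm_inv xs)"
  proof (subst distinct_conv_nth, intro allI impI)
    fix i j
    assume "i < length (perm_inv xs)" "j < length (perm_inv xs)" "i \<noteq> j"
    then show "perm_inv xs ! i \<noteq> perm_inv xs ! j"
      using nth_perm_inv_nth[OF assms, of i] nth_perm_inv_nth[OF assms, of j] assms
      by (auto simp: length_perms)
  qed
  show "set (perm_inv xs) \<subseteq> {1..m}"
    using assms nth_perm_inv_nth by (auto simp: in_set_conv_nth length_perms)
qed (simp add: assms length_perms)

lemma perm_inv_perm_inv:
  assumes "xs \<in> perms m"
  shows "perm_inv (perm_inv xs) = xs"
proof (rule nth_equalityI)
  fix y
  assume "y < length (perm_inv (perm_inv xs))"
  then have "y < m"
    using assms by (simp add: length_perms)
  have bounds: "1 \<le> xs ! y" "xs ! y \<le> m"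
    using perms_nth_bounds[OF assms \<open>y < m\<close>] by auto
  have "perm_inv (perm_inv xs) ! (perm_inv xs ! (xs ! y - 1) - 1) = Suc (xs ! y - 1)"
    using perm_inv_nth_nth[OF perm_inv_perms[OF assms]] bounds by simp
  moreover have "perm_inv xs ! (xs ! y - 1) = Suc y"
    using perm_inv_nth_nth[OF assms \<open>y < m\<close>] .
  ultimately show "perm_inv (perm_inv xs) ! y = xs ! y"
    using bounds by simp
qed simp

lemma has_1324_perm_inv:
  assumes xs: "xs \<in> perms m" and "has_1324 xs"
  shows "has_1324 (perm_inv xs)"
proof -
  obtain i j k l where "i < j" "j < k" "k < l" "l < m"
    and pattern: "xs ! i < xs ! k" "xs ! k < xs ! j" "xs ! j < xs ! l"
    using assms unfolding has_1324_def by (auto simp: length_perms)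
  moreover note perms_nth_bounds[OF xs, of i] perms_nth_bounds[OF xs, of l]
    perm_inv_nth_nth[OF xs, of i] perm_inv_nth_nth[OF xs, of j]
    perm_inv_nth_nth[OF xs, of k] perm_inv_nth_nth[OF xs, of l]
  ultimately show ?thesis
    unfolding has_1324_def
    by - (rule exI[of _ "xs ! i - 1"], rule exI[of _ "xs ! k - 1"], rule exI[of _ "xs ! j - 1"],
        rule exI[of _ "xs ! l - 1"], auto simp: length_perms[OF xs])
qed

lemma has_1324_perm_inv_iff: "xs \<in> perms m \<Longrightarrow> has_1324 (perm_inv xs) \<longleftrightarrow> has_1324 xs"
  by (metis has_1324_perm_inv perm_inv_perm_inv perm_inv_perms)

lemma has_132_below_iff:
  assumes xs: "xs \<in> perms m" and "h \<le> m"
  shows "has_132 (\<lambda>v. v \<le> h) xs \<longleftrightarrow> has_132 (\<lambda>_. True) (take h (perm_inv xs))"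
proof
  assume "has_132 (\<lambda>v. v \<le> h) xs"
  then obtain i j k where "i < j" "j < k" "k < m" "xs ! j \<le> h"
    and "xs ! i < xs ! k" "xs ! k < xs ! j"
    unfolding has_132_def by (auto simp: length_perms[OF xs])
  moreover note perms_nth_bounds[OF xs, of i] perms_nth_bounds[OF xs, of j]
    perm_inv_nth_nth[OF xs, of i] perm_inv_nth_nth[OF xs, of j] perm_inv_nth_nth[OF xs, of k]
  ultimately show "has_132 (\<lambda>_. True) (take h (perm_inv xs))"
    unfolding has_132_def
    by - (rule exI[of _ "xs ! i - 1"], rule exI[of _ "xs ! k - 1"], rule exI[of _ "xs ! j - 1"],
        auto simp: length_perms[OF xs])
next
  assume "has_132 (\<lambda>_. True) (take h (perm_inv xs))"
  then obtain a b c where "a < b" "b < c" "c < h"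
    and "perm_inv xs ! a < perm_inv xs ! c" "perm_inv xs ! c < perm_inv xs ! b"
    unfolding has_132_def by auto
  moreover note nth_perm_inv_nth[OF xs, of a] nth_perm_inv_nth[OF xs, of b]
    nth_perm_inv_nth[OF xs, of c]
  ultimately show "has_132 (\<lambda>v. v \<le> h) xs"
    unfolding has_132_def using \<open>h \<le> m\<close>
    by - (rule exI[of _ "perm_inv xs ! a - 1"], rule exI[of _ "perm_inv xs ! c - 1"],
        rule exI[of _ "perm_inv xs ! b - 1"], auto simp: length_perms[OF xs])
qed

lemma has_213_above_iff:
  assumes xs: "xs \<in> perms m" and "h \<le> m"
  shows "has_213 (\<lambda>v. h < v) xs \<longleftrightarrow> has_213 (\<lambda>_. True) (drop h (perm_inv xs))"
proof
  assume "has_213 (\<lambda>v. h < v) xs"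
  then obtain i j k where "i < j" "j < k" "k < m" "h < xs ! j"
    and "xs ! j < xs ! i" "xs ! i < xs ! k"
    unfolding has_213_def by (auto simp: length_perms[OF xs])
  moreover note perms_nth_bounds[OF xs, of k]
    perm_inv_nth_nth[OF xs, of i] perm_inv_nth_nth[OF xs, of j] perm_inv_nth_nth[OF xs, of k]
  ultimately show "has_213 (\<lambda>_. True) (drop h (perm_inv xs))"
    unfolding has_213_def
    by - (rule exI[of _ "xs ! j - 1 - h"], rule exI[of _ "xs ! i - 1 - h"],
        rule exI[of _ "xs ! k - 1 - h"], auto simp: length_perms[OF xs])
next
  assume "has_213 (\<lambda>_. True) (drop h (perm_inv xs))"
  then obtain a b c where "a < b" "b < c" "h + c < m"
    and "perm_inv xs ! (h + b) < perm_inv xs ! (h + a)"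
      "perm_inv xs ! (h + a) < perm_inv xs ! (h + c)"
    unfolding has_213_def using \<open>h \<le> m\<close> by (auto simp: length_perms[OF xs])
  moreover note nth_perm_inv_nth[OF xs, of "h + a"] nth_perm_inv_nth[OF xs, of "h + b"]
    nth_perm_inv_nth[OF xs, of "h + c"]
  ultimately show "has_213 (\<lambda>v. h < v) xs"
    unfolding has_213_def
    by - (rule exI[of _ "perm_inv xs ! (h + b) - 1"], rule exI[of _ "perm_inv xs ! (h + a) - 1"],
        rule exI[of _ "perm_inv xs ! (h + c) - 1"], auto simp: length_perms[OF xs])
qed

definition insert_min_max :: "nat \<Rightarrow> nat list \<Rightarrow> nat list" where
  "insert_min_max h \<rho> = map Suc (take h \<rho>) @ [1, Suc (Suc (length \<rho>))] @ map Suc (drop h \<rho>)"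

lemma length_insert_min_max [simp]:
  "h \<le> length \<rho> \<Longrightarrow> length (insert_min_max h \<rho>) = length \<rho> + 2"
  by (simp add: insert_min_max_def)

lemma insert_min_max_nth_less: "x < h \<Longrightarrow> h \<le> length \<rho> \<Longrightarrow> insert_min_max h \<rho> ! x = Suc (\<rho> ! x)"
  by (simp add: insert_min_max_def nth_append)

lemma insert_min_max_nth_min: "h \<le> length \<rho> \<Longrightarrow> insert_min_max h \<rho> ! h = 1"
  by (simp add: insert_min_max_def nth_append)

lemma insert_min_max_nth_max:
  "h \<le> length \<rho> \<Longrightarrow> insert_min_max h \<rho> ! Suc h = Suc (Suc (length \<rho>))"
  by (simp add: insert_min_max_def nth_append)

lemma insert_min_max_nth_greater:
  "h + 2 \<le> x \<Longrightarrow> x < length \<rho> + 2 \<Longrightarrow> h \<le> length \<rho> \<Longrightarrow>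
     insert_min_max h \<rho> ! x = Suc (\<rho> ! (x - 2))"
  by (simp add: insert_min_max_def nth_append)

lemma take_insert_min_max: "h \<le> length \<rho> \<Longrightarrow> take h (insert_min_max h \<rho>) = map Suc (take h \<rho>)"
  by (simp add: insert_min_max_def)

lemma drop_insert_min_max:
  "h \<le> length \<rho> \<Longrightarrow> drop (Suc (Suc h)) (insert_min_max h \<rho>) = map Suc (drop h \<rho>)"
  by (simp add: insert_min_max_def)

lemma insert_min_max_perms:
  assumes \<rho>: "\<rho> \<in> perms m" and "h \<le> m"
  shows "insert_min_max h \<rho> \<in> perms (Suc (Suc m))"
proof -
  have split: "map Suc \<rho> = map Suc (take h \<rho>) @ map Suc (drop h \<rho>)"
    by (simp flip: map_append)
  have "distinct (map Suc \<rho>)" "set (map Suc \<rho>) \<subseteq> {2..Suc m}"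
    using \<rho> by (auto simp: perms_def distinct_map)
  then show ?thesis
    unfolding perms_iff_subset insert_min_max_def split using \<rho> \<open>h \<le> m\<close>
    by (auto simp: length_perms)
qed

lemma insert_min_max_nth_other:
  "h \<le> length \<rho> \<Longrightarrow> x < length \<rho> + 2 \<Longrightarrow> x \<noteq> h \<Longrightarrow> x \<noteq> Suc h \<Longrightarrow>
     insert_min_max h \<rho> ! x = Suc (\<rho> ! (if x < h then x else x - 2))"
  by (simp add: insert_min_max_nth_less insert_min_max_nth_greater)

lemma has_213_of_occurrence_at_min:
  assumes "h \<le> length \<rho>" "j < k" "k < l" "l < length \<rho> + 2" "h + 2 \<le> j"
    and "insert_min_max h \<rho> ! k < insert_min_max h \<rho> ! j"
      "insert_min_max h \<rho> ! j < insert_min_max h \<rho> ! l"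
  shows "has_213 (\<lambda>_. True) (drop h \<rho>)"
proof -
  define a b c where "a = j - (h + 2)" and "b = k - (h + 2)" and "c = l - (h + 2)"
  then have abc: "j = h + 2 + a" "k = h + 2 + b" "l = h + 2 + c"
    using assms(2,3,5) by auto
  have shift: "insert_min_max h \<rho> ! (h + 2 + x) = Suc (drop h \<rho> ! x)" if "h + x < length \<rho>" for x
    using that assms(1) by (simp add: insert_min_max_nth_greater)
  have "a < b" "b < c" "c < length (drop h \<rho>)"
    using abc assms(2-4) by auto
  moreover have "drop h \<rho> ! b < drop h \<rho> ! a" "drop h \<rho> ! a < drop h \<rho> ! c"
    using assms(6,7) shift[of a] shift[of b] shift[of c] abc assms(2-4) by auto
  ultimately show ?thesis
    unfolding has_213_def by blast
qed

lemma has_132_of_occurrence_at_max: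
  assumes "h \<le> length \<rho>" "i < j" "j < k" "k < h"
    and "insert_min_max h \<rho> ! i < insert_min_max h \<rho> ! k"
      "insert_min_max h \<rho> ! k < insert_min_max h \<rho> ! j"
  shows "has_132 (\<lambda>_. True) (take h \<rho>)"
proof -
  have "k < length (take h \<rho>)" "take h \<rho> ! i < take h \<rho> ! k" "take h \<rho> ! k < take h \<rho> ! j"
    using assms by (auto simp: insert_min_max_nth_less)
  then show ?thesis
    unfolding has_132_def using assms(2,3) by blast
qed

lemma has_1324_of_occurrence_off_min_max:
  assumes "h \<le> length \<rho>" "i < j" "j < k" "k < l" "l < length \<rho> + 2"
    and "h \<notin> {i, j, k, l}" "Suc h \<notin> {i, j, k, l}"
    and "insert_min_max h \<rho> ! i < insert_min_max h \<rho> ! k"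
      "insert_min_max h \<rho> ! k < insert_min_max h \<rho> ! j"
      "insert_min_max h \<rho> ! j < insert_min_max h \<rho> ! l"
  shows "has_1324 \<rho>"
proof -
  define e where "e x = (if x < h then x else x - 2)" for x
  have e_mono: "e x < e y" if "x < y" "x \<noteq> h" "x \<noteq> Suc h" "y \<noteq> h" "y \<noteq> Suc h" for x y
    using that unfolding e_def by auto
  have e_nth: "insert_min_max h \<rho> ! x = Suc (\<rho> ! e x)" if "x \<in> {i, j, k, l}" for x
    unfolding e_def using that assms(1-7) by (auto simp: insert_min_max_nth_other)
  have "e i < e j" "e j < e k" "e k < e l"
    using e_mono assms(2-7) by auto
  moreover have "e l < length \<rho>"
    unfolding e_def using assms(1,5-7) by auto
  moreover have "\<rho> ! e i < \<rho> ! e k" "\<rho> ! e k < \<rho> ! e j" "\<rho> ! e j < \<rho> ! e l"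
    using assms(8-10) e_nth[of i] e_nth[of j] e_nth[of k] e_nth[of l] by auto
  ultimately show ?thesis
    unfolding has_1324_def by blast
qed

lemma has_1324_insert_min_max_cases:
  assumes \<rho>: "\<rho> \<in> perms m" and "h \<le> m" and "has_1324 (insert_min_max h \<rho>)"
  shows "has_1324 \<rho> \<or> has_132 (\<lambda>_. True) (take h \<rho>) \<or> has_213 (\<lambda>_. True) (drop h \<rho>)"
proof -
  let ?\<sigma> = "insert_min_max h \<rho>"
  have len: "length \<rho> = m"
    using \<rho> by (rule length_perms)
  obtain i j k l where "i < j" "j < k" "k < l" "l < m + 2"
    and pattern: "?\<sigma> ! i < ?\<sigma> ! k" "?\<sigma> ! k < ?\<sigma> ! j" "?\<sigma> ! j < ?\<sigma> ! l"
    using assms(3) \<open>h \<le> m\<close> unfolding has_1324_def by (auto simp: len)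
  moreover have "1 \<le> ?\<sigma> ! i" "?\<sigma> ! l \<le> m + 2"
    using perms_nth_bounds[OF insert_min_max_perms[OF \<rho> \<open>h \<le> m\<close>], of i]
      perms_nth_bounds[OF insert_min_max_perms[OF \<rho> \<open>h \<le> m\<close>], of l] \<open>l < m + 2\<close>
      \<open>i < j\<close> \<open>j < k\<close> \<open>k < l\<close> by auto
  ultimately have not_min_max: "h \<notin> {j, k, l}" "Suc h \<notin> {i, j, k}"
    using insert_min_max_nth_min[of h \<rho>] insert_min_max_nth_max[of h \<rho>] len \<open>h \<le> m\<close>
    by auto
  consider "i = h" | "l = Suc h" | "h \<notin> {i, j, k, l}" "Suc h \<notin> {i, j, k, l}"
    using not_min_max by blast
  then show ?thesis
  proof cases
    case 1
    then have "h + 2 \<le> j"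
      using \<open>i < j\<close> not_min_max by auto
    then show ?thesis
      using has_213_of_occurrence_at_min \<open>j < k\<close> \<open>k < l\<close> \<open>l < m + 2\<close> pattern \<open>h \<le> m\<close> len
      by blast
  next
    case 2
    then have "k < h"
      using \<open>k < l\<close> not_min_max by auto
    then show ?thesis
      using has_132_of_occurrence_at_max \<open>i < j\<close> \<open>j < k\<close> pattern \<open>h \<le> m\<close> len by blast
  next
    case 3
    then show ?thesis
      using has_1324_of_occurrence_off_min_max \<open>i < j\<close> \<open>j < k\<close> \<open>k < l\<close> \<open>l < m + 2\<close>
        pattern \<open>h \<le> m\<close> len by blast
  qed
qed

lemma has_1324_insert_min_max_of_has_1324:
  assumes "h \<le> length \<rho>" and "has_1324 \<rho>"
  shows "has_1324 (insert_min_max h \<rho>)"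
proof -
  let ?\<sigma> = "insert_min_max h \<rho>"
  obtain a b c d where "a < b" "b < c" "c < d" "d < length \<rho>"
    and pattern: "\<rho> ! a < \<rho> ! c" "\<rho> ! c < \<rho> ! b" "\<rho> ! b < \<rho> ! d"
    using assms(2) unfolding has_1324_def by blast
  define f where "f x = (if x < h then x else x + 2)" for x
  have f_nth: "?\<sigma> ! f x = Suc (\<rho> ! x)" if "x < length \<rho>" for x
    unfolding f_def using that assms(1)
    by (auto simp: insert_min_max_nth_less insert_min_max_nth_greater)
  have "f a < f b" "f b < f c" "f c < f d" "f d < length ?\<sigma>"
    unfolding f_def using \<open>a < b\<close> \<open>b < c\<close> \<open>c < d\<close> \<open>d < length \<rho>\<close> assms(1) by auto
  moreover have "?\<sigma> ! f a < ?\<sigma> ! f c" "?\<sigma> ! f c < ?\<sigma> ! f b" "?\<sigma> ! f b < ?\<sigma> ! f d"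
    using pattern f_nth[of a] f_nth[of b] f_nth[of c] f_nth[of d]
      \<open>a < b\<close> \<open>b < c\<close> \<open>c < d\<close> \<open>d < length \<rho>\<close> by auto
  ultimately show ?thesis
    unfolding has_1324_def by blast
qed

lemma has_1324_insert_min_max_of_has_132:
  assumes \<rho>: "\<rho> \<in> perms m" and "h \<le> m" and "has_132 (\<lambda>_. True) (take h \<rho>)"
  shows "has_1324 (insert_min_max h \<rho>)"
proof -
  let ?\<sigma> = "insert_min_max h \<rho>"
  have len: "length \<rho> = m"
    using \<rho> by (rule length_perms)
  obtain a b c where "a < b" "b < c" "c < h"
    and pattern: "\<rho> ! a < \<rho> ! c" "\<rho> ! c < \<rho> ! b"
    using assms(3) unfolding has_132_def using \<open>h \<le> m\<close> len by auto
  have "\<rho> ! b \<le> m"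
    using perms_nth_bounds[OF \<rho>, of b] \<open>b < c\<close> \<open>c < h\<close> \<open>h \<le> m\<close> by auto
  then have "?\<sigma> ! a < ?\<sigma> ! c" "?\<sigma> ! c < ?\<sigma> ! b" "?\<sigma> ! b < ?\<sigma> ! Suc h"
    using pattern \<open>a < b\<close> \<open>b < c\<close> \<open>c < h\<close> \<open>h \<le> m\<close> len
    by (auto simp: insert_min_max_nth_less insert_min_max_nth_max)
  moreover have "c < Suc h" "Suc h < length ?\<sigma>"
    using \<open>c < h\<close> \<open>h \<le> m\<close> len by auto
  ultimately show ?thesis
    unfolding has_1324_def using \<open>a < b\<close> \<open>b < c\<close> by blast
qed

lemma has_1324_insert_min_max_of_has_213:
  assumes \<rho>: "\<rho> \<in> perms m" and "h \<le> m" and "has_213 (\<lambda>_. True) (drop h \<rho>)"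
  shows "has_1324 (insert_min_max h \<rho>)"
proof -
  let ?\<sigma> = "insert_min_max h \<rho>"
  have len: "length \<rho> = m"
    using \<rho> by (rule length_perms)
  obtain a b c where "a < b" "b < c" "h + c < m"
    and pattern: "\<rho> ! (h + b) < \<rho> ! (h + a)" "\<rho> ! (h + a) < \<rho> ! (h + c)"
    using assms(3) unfolding has_213_def using \<open>h \<le> m\<close> len by auto
  have shift: "?\<sigma> ! (h + 2 + x) = Suc (\<rho> ! (h + x))" if "h + x < m" for x
    using that \<open>h \<le> m\<close> len by (simp add: insert_min_max_nth_greater)
  have "1 \<le> \<rho> ! (h + b)"
    using perms_nth_bounds[OF \<rho>, of "h + b"] \<open>b < c\<close> \<open>h + c < m\<close> by auto
  then have "?\<sigma> ! h < ?\<sigma> ! (h + 2 + b)" "?\<sigma> ! (h + 2 + b) < ?\<sigma> ! (h + 2 + a)"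
    "?\<sigma> ! (h + 2 + a) < ?\<sigma> ! (h + 2 + c)"
    using pattern shift[of a] shift[of b] shift[of c] \<open>a < b\<close> \<open>b < c\<close> \<open>h + c < m\<close> \<open>h \<le> m\<close> len
    by (auto simp: insert_min_max_nth_min)
  moreover have "h < h + 2 + a" "h + 2 + a < h + 2 + b" "h + 2 + b < h + 2 + c"
    "h + 2 + c < length ?\<sigma>"
    using \<open>a < b\<close> \<open>b < c\<close> \<open>h + c < m\<close> \<open>h \<le> m\<close> len by auto
  ultimately show ?thesis
    unfolding has_1324_def by blast
qed

lemma has_1324_insert_min_max_iff:
  assumes "\<rho> \<in> perms m" and "h \<le> m"
  shows "has_1324 (insert_min_max h \<rho>) \<longleftrightarrow>
    has_1324 \<rho> \<or> has_132 (\<lambda>_. True) (take h \<rho>) \<or> has_213 (\<lambda>_. True) (drop h \<rho>)"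
  using has_1324_insert_min_max_cases[OF assms] has_1324_insert_min_max_of_has_1324
    has_1324_insert_min_max_of_has_132[OF assms] has_1324_insert_min_max_of_has_213[OF assms]
    length_perms[OF assms(1)] assms(2) by blast

lemma insert_min_max_inj:
  assumes "\<rho> \<in> perms m" "\<rho>' \<in> perms m" "h \<le> m" "h' \<le> m"
    and eq: "insert_min_max h \<rho> = insert_min_max h' \<rho>'"
  shows "h = h' \<and> \<rho> = \<rho>'"
proof -
  have len: "length \<rho> = m" "length \<rho>' = m"
    using assms(1,2) by (simp_all add: length_perms)
  have "distinct (insert_min_max h \<rho>)"
    using insert_min_max_perms[OF assms(1,3)] by (rule perms_distinct)
  moreover have "insert_min_max h \<rho> ! h = 1" "insert_min_max h \<rho> ! h' = 1"
    using insert_min_max_nth_min[of h \<rho>] insert_min_max_nth_min[of h' \<rho>'] len assms(3,4) eq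
    by auto
  ultimately have "h = h'"
    using nth_eq_iff_index_eq[of "insert_min_max h \<rho>" h h'] len assms(3,4) by simp
  moreover have "map Suc (take h \<rho>) = map Suc (take h \<rho>')"
    "map Suc (drop h \<rho>) = map Suc (drop h \<rho>')"
    using take_insert_min_max[of h \<rho>] take_insert_min_max[of h \<rho>']
      drop_insert_min_max[of h \<rho>] drop_insert_min_max[of h \<rho>'] len assms(3) eq \<open>h = h'\<close>
    by simp_all
  then have "\<rho> = \<rho>'"
    by (metis append_take_drop_id inj_Suc inj_map_eq_map)
  ultimately show ?thesis ..
qed

lemma perms_remove_min_max:
  assumes "A @ [1, Suc (Suc m)] @ B \<in> perms (Suc (Suc m))"
  obtains \<rho> where "\<rho> \<in> perms m" "A @ B = map Suc \<rho>"
proof -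
  define C where "C = A @ B"
  have "distinct C" and len: "length C = m"
    and extremes: "1 \<notin> set C" "Suc (Suc m) \<notin> set C" and "set C \<subseteq> {1..Suc (Suc m)}"
    using assms unfolding C_def perms_iff_subset by auto
  have range: "2 \<le> x \<and> x \<le> Suc m" if "x \<in> set C" for x
  proof -
    have "1 \<le> x" "x \<le> Suc (Suc m)" "x \<noteq> 1" "x \<noteq> Suc (Suc m)"
      using that extremes \<open>set C \<subseteq> {1..Suc (Suc m)}\<close> by auto
    then show ?thesis
      by linarith
  qed
  have "inj_on (\<lambda>x. x - 1) (set C)"
    by (rule inj_onI) (use range in force)
  then have "map (\<lambda>x. x - 1) C \<in> perms m"
    unfolding perms_iff_subset using \<open>distinct C\<close> len by (auto simp: distinct_map dest!: range)
  moreover have "map Suc (map (\<lambda>x. x - 1) C) = C"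
    unfolding map_map by (rule map_idI) (use range in force)
  ultimately show ?thesis
    using that unfolding C_def by metis
qed

lemma insert_min_max_surj:
  assumes \<sigma>: "\<sigma> \<in> perms (Suc (Suc m))" and "Suc i < length \<sigma>"
    and "\<sigma> ! i = 1" "\<sigma> ! Suc i = Suc (Suc m)"
  obtains \<rho> where "\<rho> \<in> perms m" "i \<le> m" "insert_min_max i \<rho> = \<sigma>"
proof -
  define A B where "A = take i \<sigma>" and "B = drop (Suc (Suc i)) \<sigma>"
  have "\<sigma> = take i \<sigma> @ \<sigma> ! i # \<sigma> ! Suc i # drop (Suc (Suc i)) \<sigma>"
    using \<open>Suc i < length \<sigma>\<close> by (simp add: id_take_nth_drop Cons_nth_drop_Suc)
  then have \<sigma>_eq: "\<sigma> = A @ [1, Suc (Suc m)] @ B"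
    unfolding A_def B_def using assms(3,4) by simp
  then obtain \<rho> where \<rho>: "\<rho> \<in> perms m" "A @ B = map Suc \<rho>"
    using perms_remove_min_max \<sigma> by metis
  moreover have "length A = i"
    unfolding A_def using \<open>Suc i < length \<sigma>\<close> by simp
  ultimately have "map Suc (take i \<rho>) = A" "map Suc (drop i \<rho>) = B" "i \<le> m"
    by (metis append_eq_conv_conj drop_map take_map length_perms le_add1 length_append length_map)+
  then show ?thesis
    using that \<rho> \<sigma>_eq by (simp add: insert_min_max_def length_perms)
qed

lemma dominoes_iff_insert_min_max:
  "(\<pi>, h) \<in> dominoes m \<longleftrightarrow> \<pi> \<in> perms m \<and> h \<le> m \<and> \<not> has_1324 (insert_min_max h (perm_inv \<pi>))"
proof (cases "\<pi> \<in> perms m \<and> h \<le> m")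
  case True
  then show ?thesis
    unfolding dominoes_eq
    using has_1324_insert_min_max_iff[OF perm_inv_perms] has_1324_perm_inv_iff
      has_132_below_iff has_213_above_iff by auto
qed (auto simp: dominoes_eq)

theorem bij_betw_dominoes_S_prec:
  "bij_betw (\<lambda>(\<pi>, h). insert_min_max h (perm_inv \<pi>)) (dominoes m) (S_prec (Suc (Suc m)) 1 1)"
proof (rule bij_betw_imageI)
  show "inj_on (\<lambda>(\<pi>, h). insert_min_max h (perm_inv \<pi>)) (dominoes m)"
  proof (rule inj_onI, clarify)
    fix \<pi> h \<pi>' h'
    assume "(\<pi>, h) \<in> dominoes m" "(\<pi>', h') \<in> dominoes m"
      and eq: "insert_min_max h (perm_inv \<pi>) = insert_min_max h' (perm_inv \<pi>')"
    then have "\<pi> \<in> perms m" "\<pi>' \<in> perms m" "h \<le> m" "h' \<le> m"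
      by (simp_all add: dominoes_iff_insert_min_max)
    then have "h = h' \<and> perm_inv \<pi> = perm_inv \<pi>'"
      using insert_min_max_inj[OF perm_inv_perms perm_inv_perms _ _ eq] by blast
    then show "\<pi> = \<pi>' \<and> h = h'"
      using perm_inv_perm_inv \<open>\<pi> \<in> perms m\<close> \<open>\<pi>' \<in> perms m\<close> by metis
  qed
next
  show "(\<lambda>(\<pi>, h). insert_min_max h (perm_inv \<pi>)) ` dominoes m = S_prec (Suc (Suc m)) 1 1"
  proof (intro equalityI subsetI)
    fix \<sigma>
    assume "\<sigma> \<in> (\<lambda>(\<pi>, h). insert_min_max h (perm_inv \<pi>)) ` dominoes m"
    then obtain \<pi> h where "\<sigma> = insert_min_max h (perm_inv \<pi>)" and "\<pi> \<in> perms m" "h \<le> m"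
      and "\<not> has_1324 \<sigma>"
      by (auto simp: dominoes_iff_insert_min_max)
    moreover have "length (perm_inv \<pi>) = m"
      using \<open>\<pi> \<in> perms m\<close> by (simp add: length_perms)
    ultimately show "\<sigma> \<in> S_prec (Suc (Suc m)) 1 1"
      unfolding S_prec_1_1_eq
      by (auto intro!: insert_min_max_perms perm_inv_perms exI[of _ h]
          simp: insert_min_max_nth_min insert_min_max_nth_max)
  next
    fix \<sigma>
    assume "\<sigma> \<in> S_prec (Suc (Suc m)) 1 1"
    then obtain i where "\<sigma> \<in> perms (Suc (Suc m))" "Suc i < length \<sigma>"
      "\<sigma> ! i = 1" "\<sigma> ! Suc i = Suc (Suc m)" and "\<not> has_1324 \<sigma>"
      unfolding S_prec_1_1_eq by blast
    then obtain \<rho> where \<rho>: "\<rho> \<in> perms m" "i \<le> m" "insert_min_max i \<rho> = \<sigma>"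
      using insert_min_max_surj by metis
    then have "(perm_inv \<rho>, i) \<in> dominoes m"
      using \<open>\<not> has_1324 \<sigma>\<close>
      by (simp add: dominoes_iff_insert_min_max perm_inv_perms perm_inv_perm_inv)
    moreover have "\<sigma> = insert_min_max i (perm_inv (perm_inv \<rho>))"
      using \<rho> by (simp add: perm_inv_perm_inv)
    ultimately show "\<sigma> \<in> (\<lambda>(\<pi>, h). insert_min_max h (perm_inv \<pi>)) ` dominoes m"
      by force
  qed
qed

theorem proposition2p1:
  fixes n :: nat
  assumes "n \<ge> 2"
  shows "(\<exists>f. bij_betw f (S_prec n 1 1) (dominoes (n - 2))) \<and>
         card (S_prec n 1 1) = card (dominoes (n - 2))"
proof -
  obtain m where n: "n = Suc (Suc m)"
    using assms by (metis add_2_eq_Suc le_Suc_ex)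
  have "bij_betw (\<lambda>(\<pi>, h). insert_min_max h (perm_inv \<pi>)) (dominoes (n - 2)) (S_prec n 1 1)"
    using bij_betw_dominoes_S_prec[of m] n by simp
  then show ?thesis
    using bij_betw_inv_into bij_betw_same_card by (metis bij_betw_def)
qed

end
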